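(* Assume that the constants $\lambda_R>0$, $\delta \geq 0$, $\Delta_T \geq 0$, $\Delta_\alpha \geq 0$, and $C>0$ are such that the conditions listed in the context hold for the solution $\bar{\alpha}^s$, $\bar{\alpha}^t$, $\bar{T}$ of Problem 3. Then the difference between the rates of variation of the estimated source and target label functions $f^s = \bar{U}^s \bar{\alpha}^s$ and $f^t = \bar{U}^t \bar{T} \bar{\alpha}^t$ on the source and target graphs is bounded as \[ | (f^s)^T L^s f^s - (f^t)^T L^t f^t | \leq C^2 \delta + 2 C \lambda_R \Delta_\alpha + C^2 \lambda_R ( 2 \Delta_T + \Delta_T^2 ). \]
   Context: A source graph with $N_s$ nodes has graph Laplacian $L^s$ and a target graph with $N_t$ nodes has graph Laplacian $L^t$ (Laplacian $L=D-W$ with $W$ the weight matrix and $D$ the diagonal degree matrix). Let $0=\lambda_1^s \leq \dots \leq \lambda_R^s$ and $0=\lambda_1^t \leq \dots \leq \lambda_R^t$ be the $R$ smallest eigenvalues of $L^s$ and $L^t$, with $R<N_s$, $R<N_t$, and let $\bar{U}^s \in \mathbb{R}^{N_s \times R}$, $\bar{U}^t \in \mathbb{R}^{N_t \times R}$ contain the corresponding orthonormal eigenvectors (reduced graph Fourier bases). Problem 3 is \[ \min_{\bar{\alpha}^s, \bar{\alpha}^t, \bar{T}} \| S^s \bar{U}^s \bar{\alpha}^s - y^s \|^2 + \| S^t \bar{U}^t \bar{T} \bar{\alpha}^t - y^t \|^2 + \mu_1 \| \bar{\alpha}^s - \bar{\alpha}^t \|^2 + \mu_2 \| \bar{M} \odot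 \bar{T} \|_F^2 \] subject to $\sum_{i=1}^{R} \bar{T}_{ij}^2 = 1$ for $j=1,\dots,R$, where $S^s, S^t$ are binary selection matrices picking out labeled nodes, $y^s, y^t$ the known labels, $\bar{M}_{ij}=\exp((i-j)^2/\sigma^2)$, $\odot$ the Hadamard product, $\mu_1,\mu_2>0$, $\bar{T}\in\mathbb{R}^{R\times R}$. Conditions assumed for the solution: $| \lambda_i^s - \lambda_i^t | \leq \delta$ for all $i=1,\dots,R$; $\lambda_R = \max(\lambda_R^s, \lambda_R^t)$; $\| \bar{\alpha}^s - \bar{\alpha}^t \| \leq \Delta_\alpha$; $\| \bar{T} - I \| \leq \Delta_T$ where $I$ is the $R\times R$ identity and $\|\cdot\|$ denotes the operator norm for matrices; and $\| \bar{\alpha}^s \|, \| \bar{\alpha}^t \| \leq C$. *)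

theory Defs
  imports Complex_Main "Jordan_Normal_Form.Matrix"
begin

(* Matrices/vectors: Jordan_Normal_Form 'real mat' / 'real vec' with explicit
   dimensions. Indices are 0-based: paper's lambda_i is lam (i-1). *)

definition vnorm :: "real vec \<Rightarrow> real" where
  "vnorm v = sqrt (scalar_prod v v)"

definition opnorm :: "real mat \<Rightarrow> real" where
  "opnorm A = Sup {vnorm (A *\<^sub>v x) | x. x \<in> carrier_vec (dim_col A) \<and> vnorm x \<le> 1}"

definition hadamard :: "real mat \<Rightarrow> real mat \<Rightarrow> real mat" where
  "hadamard A B = mat (dim_row A) (dim_col A) (\<lambda>(i,j). A $$ (i,j) * B $$ (i,j))"

definition frob_sq :: "real mat \<Rightarrow> real" where
  "frob_sq A = (\<Sum>i<dim_row A. \<Sum>j<dim_col A. (A $$ (i,j))^2)"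

definition weight_matrix :: "nat \<Rightarrow> real mat \<Rightarrow> bool" where
  "weight_matrix n W \<longleftrightarrow> W \<in> carrier_mat n n \<and> transpose_mat W = W \<and>
     (\<forall>i<n. \<forall>j<n. W $$ (i,j) \<ge> 0)"

definition laplacian :: "real mat \<Rightarrow> real mat" where
  "laplacian W = mat (dim_row W) (dim_col W)
     (\<lambda>(i,j). (if i = j then (\<Sum>k<dim_col W. W $$ (i,k)) else 0) - W $$ (i,j))"

definition diag_of :: "nat \<Rightarrow> (nat \<Rightarrow> real) \<Rightarrow> real mat" where
  "diag_of n d = mat n n (\<lambda>(i,j). if i = j then d i else 0)"

(* lam 0 \<le> ... \<le> lam (R-1) are the R smallest eigenvalues (with multiplicity) of the
   N x N matrix L and the columns of U are corresponding orthonormal eigenvectors,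
   i.e. the first R columns of a full orthonormal eigenbasis with sorted eigenvalues. *)
definition reduced_fourier_basis :: "nat \<Rightarrow> nat \<Rightarrow> real mat \<Rightarrow> (nat \<Rightarrow> real) \<Rightarrow> real mat \<Rightarrow> bool" where
  "reduced_fourier_basis N R L lam U \<longleftrightarrow>
     U \<in> carrier_mat N R \<and>
     (\<exists>V mu. V \<in> carrier_mat N N \<and> transpose_mat V * V = 1\<^sub>m N \<and>
        L * V = V * diag_of N mu \<and>
        (\<forall>i j. i \<le> j \<longrightarrow> j < N \<longrightarrow> mu i \<le> mu j) \<and>
        (\<forall>j<R. col U j = col V j \<and> lam j = mu j))"

definition selection_matrix :: "nat \<Rightarrow> nat \<Rightarrow> real mat \<Rightarrow> bool" where
  "selection_matrix m N S \<longleftrightarrow> S \<in> carrier_mat m N \<and>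
     (\<exists>p. inj_on p {..<m} \<and> (\<forall>i<m. p i < N) \<and>
        (\<forall>i<m. \<forall>j<N. S $$ (i,j) = (if j = p i then 1 else 0)))"

definition Mbar :: "nat \<Rightarrow> real \<Rightarrow> real mat" where
  "Mbar R \<sigma> = mat R R (\<lambda>(i,j). exp ((real i - real j)^2 / \<sigma>^2))"

definition problem3_obj ::
  "real mat \<Rightarrow> real mat \<Rightarrow> real vec \<Rightarrow> real mat \<Rightarrow> real mat \<Rightarrow> real vec \<Rightarrow>
   real \<Rightarrow> real \<Rightarrow> real \<Rightarrow> nat \<Rightarrow> real vec \<Rightarrow> real vec \<Rightarrow> real mat \<Rightarrow> real" where
  "problem3_obj Ss Us ys St Ut yt \<mu>1 \<mu>2 \<sigma> R a_s a_t T =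
     (vnorm (Ss *\<^sub>v (Us *\<^sub>v a_s) - ys))^2
     + (vnorm (St *\<^sub>v (Ut *\<^sub>v (T *\<^sub>v a_t)) - yt))^2
     + \<mu>1 * (vnorm (a_s - a_t))^2 + \<mu>2 * frob_sq (hadamard (Mbar R \<sigma>) T)"

definition problem3_feasible :: "nat \<Rightarrow> real vec \<Rightarrow> real vec \<Rightarrow> real mat \<Rightarrow> bool" where
  "problem3_feasible R a_s a_t T \<longleftrightarrow> a_s \<in> carrier_vec R \<and> a_t \<in> carrier_vec R \<and>
     T \<in> carrier_mat R R \<and> (\<forall>j<R. (\<Sum>i<R. (T $$ (i,j))^2) = 1)"

definition problem3_solution ::
  "real mat \<Rightarrow> real mat \<Rightarrow> real vec \<Rightarrow> real mat \<Rightarrow> real mat \<Rightarrow> real vec \<Rightarrow>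
   real \<Rightarrow> real \<Rightarrow> real \<Rightarrow> nat \<Rightarrow> real vec \<Rightarrow> real vec \<Rightarrow> real mat \<Rightarrow> bool" where
  "problem3_solution Ss Us ys St Ut yt \<mu>1 \<mu>2 \<sigma> R a_s a_t T \<longleftrightarrow>
     problem3_feasible R a_s a_t T \<and>
     (\<forall>a_s' a_t' T'. problem3_feasible R a_s' a_t' T' \<longrightarrow>
        problem3_obj Ss Us ys St Ut yt \<mu>1 \<mu>2 \<sigma> R a_s a_t T
        \<le> problem3_obj Ss Us ys St Ut yt \<mu>1 \<mu>2 \<sigma> R a_s' a_t' T')"

end

theory Submission
  imports Defs "HOL-Analysis.L2_Norm"
begin

(* In an orthonormal eigenbasis a Laplacian quadratic form diagonalises:
   (U a)^T L (U a) = \<Sum>j lam_j a_j^2. Writing T a_t = a_t + e with |e| \<le> \<Delta>T C, the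
   difference of the two energies telescopes into three perturbations: changing the
   eigenvalues costs at most \<delta> |a_s|^2, changing a_s into a_t at most
   \<lambda>_R |a_s - a_t| (|a_s| + |a_t|), and adding e at most \<lambda>_R |e| (|a_t| + |a_t + e|).
   The eigenvalues of a graph Laplacian are nonnegative, so those of the target graph
   lie in [0, \<lambda>_R]. *)

lemma L2_set_power2: "(L2_set f A)\<^sup>2 = (\<Sum>i\<in>A. (f i)\<^sup>2)"
  unfolding L2_set_def by (simp add: sum_nonneg)

lemma vnorm_eq_L2_set: "vnorm v = L2_set (\<lambda>i. v $ i) {..<dim_vec v}"
  unfolding vnorm_def L2_set_def scalar_prod_def by (simp add: atLeast0LessThan power2_eq_square)

lemma vnorm_minus_eq_L2_set:
  assumes "a \<in> carrier_vec n" "c \<in> carrier_vec n"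
  shows "vnorm (a - c) = L2_set (\<lambda>i. a $ i - c $ i) {..<n}"
  unfolding vnorm_eq_L2_set using assms by (intro L2_set_cong) auto

lemma vnorm_smult: "vnorm (k \<cdot>\<^sub>v v) = \<bar>k\<bar> * vnorm v"
proof -
  have "(k \<cdot>\<^sub>v v) \<bullet> (k \<cdot>\<^sub>v v) = k\<^sup>2 * (v \<bullet> v)"
    by (simp add: scalar_prod_def sum_distrib_left power2_eq_square algebra_simps)
  then show ?thesis unfolding vnorm_def by (simp add: real_sqrt_mult)
qed

lemma vnorm_mult_mat_vec_le_sum_abs:
  assumes E: "E \<in> carrier_mat m n" and x: "x \<in> carrier_vec n" and "vnorm x \<le> 1"
  shows "vnorm (E *\<^sub>v x) \<le> (\<Sum>i<m. \<Sum>j<n. \<bar>E $$ (i,j)\<bar>)"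
proof -
  have x_le: "\<bar>x $ j\<bar> \<le> 1" if "j < n" for j
  proof -
    have "\<bar>x $ j\<bar> \<le> L2_set (\<lambda>i. \<bar>x $ i\<bar>) {..<n}" using that by (intro member_le_L2_set) auto
    also have "\<dots> = vnorm x" using x by (simp add: vnorm_eq_L2_set L2_set_def)
    finally show ?thesis using assms(3) by simp
  qed
  have "vnorm (E *\<^sub>v x) = L2_set (\<lambda>i. (E *\<^sub>v x) $ i) {..<m}"
    using E by (simp add: vnorm_eq_L2_set)
  also have "\<dots> \<le> (\<Sum>i<m. \<bar>(E *\<^sub>v x) $ i\<bar>)"
    by (rule L2_set_le_sum_abs)
  also have "\<dots> \<le> (\<Sum>i<m. \<Sum>j<n. \<bar>E $$ (i,j)\<bar>)"
  proof (rule sum_mono)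
    fix i assume i: "i \<in> {..<m}"
    have "\<bar>(E *\<^sub>v x) $ i\<bar> = \<bar>\<Sum>j<n. E $$ (i,j) * x $ j\<bar>"
      using E x i by (simp add: scalar_prod_def atLeast0LessThan)
    also have "\<dots> \<le> (\<Sum>j<n. \<bar>E $$ (i,j)\<bar> * \<bar>x $ j\<bar>)"
      by (rule sum_abs[THEN order_trans]) (simp add: abs_mult)
    also have "\<dots> \<le> (\<Sum>j<n. \<bar>E $$ (i,j)\<bar>)"
      by (rule sum_mono) (auto intro: mult_left_le x_le)
    finally show "\<bar>(E *\<^sub>v x) $ i\<bar> \<le> (\<Sum>j<n. \<bar>E $$ (i,j)\<bar>)" .
  qed
  finally show ?thesis .
qed

lemma vnorm_mult_mat_vec_le_opnorm:
  assumes E: "E \<in> carrier_mat m n" and c: "c \<in> carrier_vec n"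
  shows "vnorm (E *\<^sub>v c) \<le> opnorm E * vnorm c"
proof (cases "vnorm c = 0")
  case True
  then have "c = 0\<^sub>v n" using c unfolding vnorm_eq_L2_set
    by (subst (asm) L2_set_eq_0_iff) auto
  moreover have "E *\<^sub>v 0\<^sub>v n = 0\<^sub>v m" using E by (intro eq_vecI) auto
  ultimately show ?thesis using True by (simp add: vnorm_def)
next
  case False
  then have pos: "vnorm c > 0" unfolding vnorm_eq_L2_set using L2_set_nonneg
    by (metis less_eq_real_def)
  let ?x = "(1 / vnorm c) \<cdot>\<^sub>v c"
  have bdd: "bdd_above {vnorm (E *\<^sub>v x) | x. x \<in> carrier_vec (dim_col E) \<and> vnorm x \<le> 1}"
    using vnorm_mult_mat_vec_le_sum_abs[OF E] E
    by (intro bdd_aboveI[where M="\<Sum>i<m. \<Sum>j<n. \<bar>E $$ (i,j)\<bar>"]) auto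
  have "vnorm (E *\<^sub>v ?x) \<le> opnorm E"
    unfolding opnorm_def
    by (rule cSup_upper[OF _ bdd]) (use c E pos in \<open>auto simp: vnorm_smult\<close>)
  also have "E *\<^sub>v ?x = (1 / vnorm c) \<cdot>\<^sub>v (E *\<^sub>v c)" using mult_mat_vec[OF E c] by simp
  finally show ?thesis using pos by (simp add: vnorm_smult field_simps)
qed

lemma laplacian_carrier: "weight_matrix N W \<Longrightarrow> laplacian W \<in> carrier_mat N N"
  unfolding weight_matrix_def laplacian_def by auto

lemma laplacian_mult_vec_index:
  assumes W: "W \<in> carrier_mat N N" and x: "x \<in> carrier_vec N" and i: "i < N"
  shows "(laplacian W *\<^sub>v x) $ i = (\<Sum>j<N. W $$ (i,j) * (x $ i - x $ j))"
proof -
  let ?d = "\<Sum>k<N. W $$ (i,k)"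
  have "(laplacian W *\<^sub>v x) $ i
      = (\<Sum>j<N. (if j = i then ?d else 0) * x $ j) - (\<Sum>j<N. W $$ (i,j) * x $ j)"
    using i W x
    by (simp add: laplacian_def scalar_prod_def atLeast0LessThan left_diff_distrib
        sum_subtractf eq_commute[of i] cong: if_cong)
  also have "(\<Sum>j<N. (if j = i then ?d else 0) * x $ j) = ?d * x $ i"
    using i by (simp add: if_distrib[of "\<lambda>t. t * _"] cong: if_cong)
  also have "?d * x $ i - (\<Sum>j<N. W $$ (i,j) * x $ j) = (\<Sum>j<N. W $$ (i,j) * (x $ i - x $ j))"
    by (simp add: sum_distrib_right sum_subtractf right_diff_distrib)
  finally show ?thesis .
qed

lemma laplacian_quadratic_form:
  assumes W: "weight_matrix N W" and x: "x \<in> carrier_vec N"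
  shows "2 * (x \<bullet> (laplacian W *\<^sub>v x)) = (\<Sum>i<N. \<Sum>j<N. W $$ (i,j) * (x $ i - x $ j)\<^sup>2)"
proof -
  have Wc: "W \<in> carrier_mat N N" and sym: "\<And>i j. i < N \<Longrightarrow> j < N \<Longrightarrow> W $$ (j,i) = W $$ (i,j)"
    using W unfolding weight_matrix_def
    by (auto, metis index_transpose_mat(1) carrier_matD(1) carrier_matD(2))
  define S where "S = (\<Sum>i<N. \<Sum>j<N. W $$ (i,j) * (x $ i * (x $ i - x $ j)))"
  have "x \<bullet> (laplacian W *\<^sub>v x) = (\<Sum>i<N. x $ i * (laplacian W *\<^sub>v x) $ i)"
    using x Wc by (simp add: scalar_prod_def atLeast0LessThan laplacian_def)
  also have "\<dots> = S"
    unfolding S_def using Wc x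
    by (intro sum.cong refl) (simp add: laplacian_mult_vec_index sum_distrib_left algebra_simps)
  finally have form: "x \<bullet> (laplacian W *\<^sub>v x) = S" .
  have "S = (\<Sum>j<N. \<Sum>i<N. W $$ (j,i) * (x $ i * (x $ i - x $ j)))"
    unfolding S_def by (subst sum.swap) (intro sum.cong refl, simp add: sym)
  then have swapped: "S = (\<Sum>i<N. \<Sum>j<N. W $$ (i,j) * (x $ j * (x $ j - x $ i)))" .
  have "2 * S = (\<Sum>i<N. \<Sum>j<N. W $$ (i,j) * (x $ i - x $ j)\<^sup>2)"
    by (subst mult_2, subst (1) S_def, subst swapped)
      (simp add: sum.distrib[symmetric] power2_eq_square algebra_simps)
  then show ?thesis using form by simp
qed

lemma laplacian_psd:
  assumes W: "weight_matrix N W" and x: "x \<in> carrier_vec N"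
  shows "0 \<le> x \<bullet> (laplacian W *\<^sub>v x)"
proof -
  have "\<And>i j. i < N \<Longrightarrow> j < N \<Longrightarrow> 0 \<le> W $$ (i,j)" using W unfolding weight_matrix_def by auto
  then have "0 \<le> (\<Sum>i<N. \<Sum>j<N. W $$ (i,j) * (x $ i - x $ j)\<^sup>2)"
    by (intro sum_nonneg) simp
  then show ?thesis using laplacian_quadratic_form[OF W x] by simp
qed

lemma mult_diag_of_index:
  assumes "A \<in> carrier_mat n m" "i < n" "j < m"
  shows "(A * diag_of m d) $$ (i,j) = A $$ (i,j) * d j"
  using assms
  by (simp add: scalar_prod_def diag_of_def if_distrib[of "\<lambda>t. _ * t"] cong: if_cong)

lemma diag_of_mult_vec_index:
  assumes "a \<in> carrier_vec n" "j < n"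
  shows "(diag_of n d *\<^sub>v a) $ j = d j * a $ j"
  using assms
  by (simp add: scalar_prod_def diag_of_def if_distrib[of "\<lambda>t. t * _"] cong: if_cong)

lemma reduced_fourier_basisD:
  assumes rfb: "reduced_fourier_basis N R L lam U" and L: "L \<in> carrier_mat N N" and "R \<le> N"
  shows "U \<in> carrier_mat N R"
    and "L * U = U * diag_of R lam"
    and "transpose_mat U * U = 1\<^sub>m R"
    and "\<And>i j. i \<le> j \<Longrightarrow> j < R \<Longrightarrow> lam i \<le> lam j"
proof -
  show U: "U \<in> carrier_mat N R" using rfb unfolding reduced_fourier_basis_def by blast
  obtain V mu where V: "V \<in> carrier_mat N N" and VV: "transpose_mat V * V = 1\<^sub>m N"
    and LV: "L * V = V * diag_of N mu" and mono: "\<forall>i j. i \<le> j \<longrightarrow> j < N \<longrightarrow> mu i \<le> mu j"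
    and cols: "\<forall>j<R. col U j = col V j \<and> lam j = mu j"
    using rfb unfolding reduced_fourier_basis_def by blast
  show "\<And>i j. i \<le> j \<Longrightarrow> j < R \<Longrightarrow> lam i \<le> lam j" using mono cols \<open>R \<le> N\<close> by auto
  have UV: "U $$ (i,j) = V $$ (i,j)" if "i < N" "j < R" for i j
  proof -
    have "U $$ (i,j) = col U j $ i" using U that by simp
    also have "\<dots> = col V j $ i" using cols that by simp
    also have "\<dots> = V $$ (i,j)" using V that \<open>R \<le> N\<close> by simp
    finally show ?thesis .
  qed
  show "L * U = U * diag_of R lam"
  proof (rule eq_matI)
    fix i j assume "i < dim_row (U * diag_of R lam)" "j < dim_col (U * diag_of R lam)"
    then have i: "i < N" and j: "j < R" using U by (auto simp: diag_of_def)
    have "(L * U) $$ (i,j) = row L i \<bullet> col V j" using i j L U cols by simp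
    also have "\<dots> = (V * diag_of N mu) $$ (i,j)" using i j L V \<open>R \<le> N\<close> by (simp flip: LV)
    also have "\<dots> = (U * diag_of R lam) $$ (i,j)"
      using U V i j \<open>R \<le> N\<close> cols UV by (simp add: mult_diag_of_index)
    finally show "(L * U) $$ (i,j) = (U * diag_of R lam) $$ (i,j)" .
  qed (use U L in \<open>auto simp: diag_of_def\<close>)
  show "transpose_mat U * U = 1\<^sub>m R"
  proof (rule eq_matI)
    fix i j assume "i < dim_row (1\<^sub>m R :: real mat)" "j < dim_col (1\<^sub>m R :: real mat)"
    then have i: "i < R" and j: "j < R" by auto
    have "(transpose_mat U * U) $$ (i,j) = col V i \<bullet> col V j" using i j U cols by simp
    also have "\<dots> = (transpose_mat V * V) $$ (i,j)" using i j V \<open>R \<le> N\<close> by simp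
    finally show "(transpose_mat U * U) $$ (i,j) = 1\<^sub>m R $$ (i,j)" using VV i j \<open>R \<le> N\<close> by simp
  qed (use U in auto)
qed

lemma reduced_fourier_basis_quadratic_form:
  assumes rfb: "reduced_fourier_basis N R L lam U" and L: "L \<in> carrier_mat N N" and "R \<le> N"
    and a: "a \<in> carrier_vec R"
  shows "(U *\<^sub>v a) \<bullet> (L *\<^sub>v (U *\<^sub>v a)) = (\<Sum>j<R. lam j * (a $ j)\<^sup>2)"
proof -
  note U = reduced_fourier_basisD[OF assms(1-3)]
  have D: "diag_of R lam \<in> carrier_mat R R" by (simp add: diag_of_def)
  have "L *\<^sub>v (U *\<^sub>v a) = U *\<^sub>v (diag_of R lam *\<^sub>v a)"
    using U(1) L a D by (simp flip: assoc_mult_mat_vec add: U(2))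
  then have "(U *\<^sub>v a) \<bullet> (L *\<^sub>v (U *\<^sub>v a)) = (transpose_mat U *\<^sub>v (U *\<^sub>v a)) \<bullet> (diag_of R lam *\<^sub>v a)"
    using transpose_vec_mult_scalar[OF U(1), of "diag_of R lam *\<^sub>v a" "U *\<^sub>v a"] D a U(1) by simp
  also have "transpose_mat U *\<^sub>v (U *\<^sub>v a) = a"
    using assoc_mult_mat_vec[of "transpose_mat U" R N U R a] U(1,3) a by simp
  also have "a \<bullet> (diag_of R lam *\<^sub>v a) = (\<Sum>j<R. lam j * (a $ j)\<^sup>2)"
    unfolding scalar_prod_def[of a] using D
    by (simp add: atLeast0LessThan diag_of_mult_vec_index[OF a] power2_eq_square algebra_simps
        del: index_mult_mat_vec)
  finally show ?thesis .
qed

lemma reduced_fourier_basis_eigenvalue_nonneg: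
  assumes W: "weight_matrix N W" and rfb: "reduced_fourier_basis N R (laplacian W) lam U"
    and "R \<le> N" and j: "j < R"
  shows "0 \<le> lam j"
proof -
  let ?u = "unit_vec R j :: real vec"
  have L: "laplacian W \<in> carrier_mat N N" using W by (rule laplacian_carrier)
  have "0 \<le> (U *\<^sub>v ?u) \<bullet> (laplacian W *\<^sub>v (U *\<^sub>v ?u))"
    using reduced_fourier_basisD(1)[OF rfb L \<open>R \<le> N\<close>] by (intro laplacian_psd[OF W]) simp
  also have "\<dots> = (\<Sum>k<R. lam k * (?u $ k)\<^sup>2)"
    by (rule reduced_fourier_basis_quadratic_form[OF rfb L \<open>R \<le> N\<close>]) simp
  also have "\<dots> = (\<Sum>k<R. if k = j then lam j else 0)"
    by (rule sum.cong) (auto simp: unit_vec_def)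
  also have "\<dots> = lam j" using j by simp
  finally show ?thesis .
qed

lemma weighted_sum_sq_diff_weights_le:
  assumes "\<And>j. j \<in> A \<Longrightarrow> \<bar>l j - l' j\<bar> \<le> \<delta>" and "0 \<le> \<delta>"
  shows "\<bar>(\<Sum>j\<in>A. l j * (a j)\<^sup>2) - (\<Sum>j\<in>A. l' j * (a j)\<^sup>2)\<bar> \<le> \<delta> * (L2_set a A)\<^sup>2"
proof -
  have "\<bar>(\<Sum>j\<in>A. l j * (a j)\<^sup>2) - (\<Sum>j\<in>A. l' j * (a j)\<^sup>2)\<bar> = \<bar>\<Sum>j\<in>A. (l j - l' j) * (a j)\<^sup>2\<bar>"
    by (simp add: sum_subtractf left_diff_distrib)
  also have "\<dots> \<le> (\<Sum>j\<in>A. \<bar>l j - l' j\<bar> * (a j)\<^sup>2)"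
    by (rule sum_abs[THEN order_trans]) (simp add: abs_mult)
  also have "\<dots> \<le> (\<Sum>j\<in>A. \<delta> * (a j)\<^sup>2)"
    using assms(1) by (intro sum_mono mult_right_mono) auto
  also have "\<dots> = \<delta> * (L2_set a A)\<^sup>2" by (simp add: L2_set_power2 sum_distrib_left)
  finally show ?thesis .
qed

lemma weighted_sum_sq_diff_le:
  assumes "\<And>j. j \<in> A \<Longrightarrow> \<bar>l j\<bar> \<le> \<Lambda>" and "0 \<le> \<Lambda>"
  shows "\<bar>(\<Sum>j\<in>A. l j * (a j)\<^sup>2) - (\<Sum>j\<in>A. l j * (c j)\<^sup>2)\<bar>
    \<le> \<Lambda> * L2_set (\<lambda>j. a j - c j) A * (L2_set a A + L2_set c A)"
proof -
  have "\<bar>(\<Sum>j\<in>A. l j * (a j)\<^sup>2) - (\<Sum>j\<in>A. l j * (c j)\<^sup>2)\<bar>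
      = \<bar>\<Sum>j\<in>A. l j * ((a j - c j) * (a j + c j))\<bar>"
    by (simp add: sum_subtractf[symmetric] algebra_simps power2_eq_square)
  also have "\<dots> \<le> (\<Sum>j\<in>A. \<Lambda> * (\<bar>a j - c j\<bar> * \<bar>a j + c j\<bar>))"
    using assms(1)
    by (intro sum_abs[THEN order_trans] sum_mono) (auto simp: abs_mult intro!: mult_right_mono)
  also have "\<dots> \<le> \<Lambda> * (L2_set (\<lambda>j. a j - c j) A * L2_set (\<lambda>j. a j + c j) A)"
    using L2_set_mult_ineq \<open>0 \<le> \<Lambda>\<close> by (simp flip: sum_distrib_left) (rule mult_left_mono)
  also have "\<dots> \<le> \<Lambda> * (L2_set (\<lambda>j. a j - c j) A * (L2_set a A + L2_set c A))"
    using L2_set_triangle_ineq \<open>0 \<le> \<Lambda>\<close> by (intro mult_left_mono) auto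
  finally show ?thesis by (simp add: mult.assoc)
qed

lemma weighted_energy_perturbation_le:
  fixes a b c :: "real vec"
  assumes vecs: "a \<in> carrier_vec n" "b \<in> carrier_vec n" "c \<in> carrier_vec n"
    and weights: "\<And>j. j < n \<Longrightarrow> \<bar>l j - l' j\<bar> \<le> \<delta>" "0 \<le> \<delta>"
    and bound: "\<And>j. j < n \<Longrightarrow> \<bar>l' j\<bar> \<le> \<Lambda>" "0 \<le> \<Lambda>"
    and na: "vnorm a \<le> C" and nc: "vnorm c \<le> C"
    and nac: "vnorm (a - c) \<le> D\<alpha>" and nbc: "vnorm (b - c) \<le> D\<beta>"
  shows "\<bar>(\<Sum>j<n. l j * (a $ j)\<^sup>2) - (\<Sum>j<n. l' j * (b $ j)\<^sup>2)\<bar>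
    \<le> C\<^sup>2 * \<delta> + 2 * C * \<Lambda> * D\<alpha> + \<Lambda> * D\<beta> * (2 * C + D\<beta>)"
proof -
  let ?A = "{..<n}" and ?a = "\<lambda>j. a $ j" and ?b = "\<lambda>j. b $ j" and ?c = "\<lambda>j. c $ j"
  have La: "L2_set ?a ?A \<le> C" and Lc: "L2_set ?c ?A \<le> C"
    using na nc vecs by (simp_all add: vnorm_eq_L2_set)
  have Lac: "L2_set (\<lambda>j. a $ j - c $ j) ?A \<le> D\<alpha>"
    using nac vecs by (simp add: vnorm_minus_eq_L2_set)
  have Lbc: "L2_set (\<lambda>j. b $ j - c $ j) ?A \<le> D\<beta>"
    using nbc vecs by (simp add: vnorm_minus_eq_L2_set)
  have "L2_set ?b ?A = L2_set (\<lambda>j. c $ j + (b $ j - c $ j)) ?A" by simp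
  also have "\<dots> \<le> L2_set ?c ?A + L2_set (\<lambda>j. b $ j - c $ j) ?A" by (rule L2_set_triangle_ineq)
  finally have Lb: "L2_set ?b ?A \<le> C + D\<beta>" using Lc Lbc by linarith
  have "\<bar>(\<Sum>j<n. l j * (a $ j)\<^sup>2) - (\<Sum>j<n. l' j * (a $ j)\<^sup>2)\<bar> \<le> \<delta> * (L2_set ?a ?A)\<^sup>2"
    using weights by (intro weighted_sum_sq_diff_weights_le) auto
  also have "\<dots> \<le> \<delta> * C\<^sup>2"
    using La \<open>0 \<le> \<delta>\<close> by (intro mult_left_mono power_mono) auto
  finally have eigenvalues: "\<bar>(\<Sum>j<n. l j * (a $ j)\<^sup>2) - (\<Sum>j<n. l' j * (a $ j)\<^sup>2)\<bar> \<le> C\<^sup>2 * \<delta>"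
    by (simp add: mult.commute)
  have "\<bar>(\<Sum>j<n. l' j * (a $ j)\<^sup>2) - (\<Sum>j<n. l' j * (c $ j)\<^sup>2)\<bar>
      \<le> \<Lambda> * L2_set (\<lambda>j. a $ j - c $ j) ?A * (L2_set ?a ?A + L2_set ?c ?A)"
    using bound by (intro weighted_sum_sq_diff_le) auto
  also have "\<dots> \<le> \<Lambda> * D\<alpha> * (C + C)"
    using La Lc Lac \<open>0 \<le> \<Lambda>\<close> order_trans[OF L2_set_nonneg Lac]
    by (intro mult_mono add_mono mult_left_mono) auto
  finally have coefficients: "\<bar>(\<Sum>j<n. l' j * (a $ j)\<^sup>2) - (\<Sum>j<n. l' j * (c $ j)\<^sup>2)\<bar> \<le> 2 * C * \<Lambda> * D\<alpha>"
    by (simp add: algebra_simps)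
  have "\<bar>(\<Sum>j<n. l' j * (b $ j)\<^sup>2) - (\<Sum>j<n. l' j * (c $ j)\<^sup>2)\<bar>
      \<le> \<Lambda> * L2_set (\<lambda>j. b $ j - c $ j) ?A * (L2_set ?b ?A + L2_set ?c ?A)"
    using bound by (intro weighted_sum_sq_diff_le) auto
  also have "\<dots> \<le> \<Lambda> * D\<beta> * (2 * C + D\<beta>)"
    using Lb Lc Lbc \<open>0 \<le> \<Lambda>\<close> order_trans[OF L2_set_nonneg Lbc]
    by (intro mult_mono mult_left_mono) auto
  finally have perturbation: "\<bar>(\<Sum>j<n. l' j * (b $ j)\<^sup>2) - (\<Sum>j<n. l' j * (c $ j)\<^sup>2)\<bar>
      \<le> \<Lambda> * D\<beta> * (2 * C + D\<beta>)" .
  show ?thesis using eigenvalues coefficients perturbation by linarith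
qed

theorem proposition1:
  fixes Ns Nt R ms mt :: nat
    and Ws Wt Us Ut Ss St T :: "real mat"
    and lams lamt :: "nat \<Rightarrow> real"
    and ys yt a_s a_t :: "real vec"
    and \<mu>1 \<mu>2 \<sigma> lamR \<delta> \<Delta>T \<Delta>\<alpha> C :: real
  assumes "0 < R" "R < Ns" "R < Nt"
    and "weight_matrix Ns Ws" "weight_matrix Nt Wt"
    and "reduced_fourier_basis Ns R (laplacian Ws) lams Us"
    and "reduced_fourier_basis Nt R (laplacian Wt) lamt Ut"
    and "selection_matrix ms Ns Ss" "selection_matrix mt Nt St"
    and "ys \<in> carrier_vec ms" "yt \<in> carrier_vec mt"
    and "\<mu>1 > 0" "\<mu>2 > 0" "\<sigma> > 0"
    and "problem3_solution Ss Us ys St Ut yt \<mu>1 \<mu>2 \<sigma> R a_s a_t T"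
    and "lamR > 0" "\<delta> \<ge> 0" "\<Delta>T \<ge> 0" "\<Delta>\<alpha> \<ge> 0" "C > 0"
    and "\<forall>i<R. \<bar>lams i - lamt i\<bar> \<le> \<delta>"
    and "lamR = max (lams (R - 1)) (lamt (R - 1))"
    and "vnorm (a_s - a_t) \<le> \<Delta>\<alpha>"
    and "opnorm (T - 1\<^sub>m R) \<le> \<Delta>T"
    and "vnorm a_s \<le> C" "vnorm a_t \<le> C"
  shows "\<bar>scalar_prod (Us *\<^sub>v a_s) (laplacian Ws *\<^sub>v (Us *\<^sub>v a_s))
          - scalar_prod (Ut *\<^sub>v (T *\<^sub>v a_t)) (laplacian Wt *\<^sub>v (Ut *\<^sub>v (T *\<^sub>v a_t)))\<bar>
         \<le> C^2 * \<delta> + 2 * C * lamR * \<Delta>\<alpha> + C^2 * lamR * (2 * \<Delta>T + \<Delta>T^2)"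
proof -
  have a_s: "a_s \<in> carrier_vec R" and a_t: "a_t \<in> carrier_vec R" and T: "T \<in> carrier_mat R R"
    using assms(15) unfolding problem3_solution_def problem3_feasible_def by auto
  have Ls: "laplacian Ws \<in> carrier_mat Ns Ns" and Lt: "laplacian Wt \<in> carrier_mat Nt Nt"
    using assms(4,5) by (simp_all add: laplacian_carrier)
  have "R \<le> Ns" "R \<le> Nt" using assms(2,3) by simp_all
  note source_energy = reduced_fourier_basis_quadratic_form[OF assms(6) Ls \<open>R \<le> Ns\<close> a_s]
  note target_energy = reduced_fourier_basis_quadratic_form[OF assms(7) Lt \<open>R \<le> Nt\<close>, of "T *\<^sub>v a_t"]
  have lamt_bound: "\<bar>lamt j\<bar> \<le> lamR" if "j < R" for j
  proof -
    have "0 \<le> lamt j" using reduced_fourier_basis_eigenvalue_nonneg[OF assms(5,7) \<open>R \<le> Nt\<close> that] .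
    moreover have "lamt j \<le> lamt (R - 1)"
      by (rule reduced_fourier_basisD(4)[OF assms(7) Lt \<open>R \<le> Nt\<close>]) (use that in auto)
    ultimately show ?thesis using \<open>lamR = _\<close> by auto
  qed
  have "T *\<^sub>v a_t - a_t = (T - 1\<^sub>m R) *\<^sub>v a_t"
    using minus_mult_distrib_mat_vec[OF T _ a_t, of "1\<^sub>m R"] a_t by simp
  also have "vnorm \<dots> \<le> opnorm (T - 1\<^sub>m R) * vnorm a_t"
    using T a_t by (intro vnorm_mult_mat_vec_le_opnorm) auto
  also have "\<dots> \<le> \<Delta>T * C"
    using assms(18,24,26) by (intro mult_mono) (auto simp: vnorm_eq_L2_set)
  finally have "vnorm (T *\<^sub>v a_t - a_t) \<le> \<Delta>T * C" .
  then have "\<bar>(\<Sum>j<R. lams j * (a_s $ j)\<^sup>2) - (\<Sum>j<R. lamt j * ((T *\<^sub>v a_t) $ j)\<^sup>2)\<bar>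
      \<le> C\<^sup>2 * \<delta> + 2 * C * lamR * \<Delta>\<alpha> + lamR * (\<Delta>T * C) * (2 * C + \<Delta>T * C)"
    using a_s a_t T assms(16,17,21,23,25,26) lamt_bound
    by (intro weighted_energy_perturbation_le[where n = R]) auto
  then show ?thesis
    using source_energy target_energy T a_t by (simp add: algebra_simps power2_eq_square)
qed

end
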